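(* Let $?:[0,\infty]\to[0,2]$ be the Minkowski question mark function. Then $$f(t)=\int_0^1 e^{ixt}\,d?(x)\to 0\quad\text{as } |t|\to\infty$$ if and only if the two limit equalities $$\lim_{t\to+\infty} t\int_0^\infty ?\!\left(\tfrac1x\right)\sin(xt)\,dx=2,\qquad \lim_{t\to+\infty} t\int_0^\infty ?\!\left(\tfrac1x\right)\cos(xt)\,dx=0$$ hold simultaneously.
   Context: The Minkowski question mark function is defined on $[0,1]$ by $?(0)=0$, $?(1)=1$ and, for $x=[0;a_1,a_2,a_3,\dots]$ written as a regular continued fraction (finite for rational $x$, in which case the sum is finite), $?(x)=2\sum_{i\ge1}(-1)^{i+1}2^{-(a_1+\cdots+a_i)}$. It is continuous, strictly increasing and singular. It is extended to $[0,\infty]$ by the functional equation $?(x)+?(1/x)=2$ for $x>0$, with $?(\infty)=2$; thus $?(1/x)$ takes the value $2$ at $x=0$. *)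

theory Defs
  imports "HOL-Analysis.Analysis"
begin

text \<open>Gauss map: x maps to the fractional part of 1/x (with 1/0 = 0 in HOL, so 0 is fixed).\<close>
definition gauss_map :: "real \<Rightarrow> real" where
  "gauss_map x = frac (1 / x)"

definition cf_rem :: "real \<Rightarrow> nat \<Rightarrow> real" where
  "cf_rem x n = (gauss_map ^^ n) x"

text \<open>Partial quotient a_(n+1) = floor (1 / x_n) (meaningful while x_n is nonzero).\<close>
definition cf_digit :: "real \<Rightarrow> nat \<Rightarrow> real" where
  "cf_digit x n = of_int \<lfloor>1 / cf_rem x n\<rfloor>"

text \<open>The (i+1)-th term (-1)^i * 2^(-(a_1+...+a_(i+1))), present only while the
  expansion has not terminated (i.e. x_i is nonzero).\<close>
definition minkowski_term :: "real \<Rightarrow> nat \<Rightarrow> real" where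
  "minkowski_term x i =
     (if cf_rem x i = 0 then 0
      else (-1) ^ i * 2 powr (- (\<Sum>j\<le>i. cf_digit x j)))"

definition minkowski01 :: "real \<Rightarrow> real" where
  "minkowski01 x =
     (if x = 0 then 0 else if x = 1 then 1 else 2 * (\<Sum>i. minkowski_term x i))"

text \<open>Extension to [0,infinity) via ?(x) + ?(1/x) = 2.\<close>
definition minkowski :: "real \<Rightarrow> real" where
  "minkowski x = (if x \<le> 1 then minkowski01 x else 2 - minkowski01 (1 / x))"

text \<open>The function x maps to ?(1/x) on [0,infinity), with value ?(infinity) = 2 at x = 0.\<close>
definition minkowski_inv :: "real \<Rightarrow> real" where
  "minkowski_inv x = (if x = 0 then 2 else minkowski (1 / x))"

text \<open>Distribution function of the measure d? on [0,1] (0 left of 0, 1 right of 1).\<close>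
definition minkowski_cdf :: "real \<Rightarrow> real" where
  "minkowski_cdf x = (if x \<le> 0 then 0 else if 1 \<le> x then 1 else minkowski01 x)"

definition minkowski_fourier :: "real \<Rightarrow> complex" where
  "minkowski_fourier t =
     (LINT x:{0..1}|interval_measure minkowski_cdf. cis (x * t))"

end

theory Submission
  imports Defs
begin

text \<open>
  Put \<open>\<Phi>(t) = f(t) / (1 - e\<^sup>i\<^sup>t/2)\<close>. On \<open>[0, \<infinity>)\<close> the function \<open>?(1/x)\<close> satisfies
  \<open>?(1/(x+1)) = ?(1/x)/2\<close>, and on \<open>[0,1]\<close> it equals \<open>2 - ?(x)\<close>. Hence
  \<open>\<integral>\<^sub>0\<^sup>\<infinity> ?(1/x) e\<^sup>i\<^sup>x\<^sup>t dx\<close> is a geometric series over the intervals \<open>[n, n+1)\<close> with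
  ratio \<open>e\<^sup>i\<^sup>t/2\<close>, and integrating \<open>\<integral>\<^sub>0\<^sup>1 (2 - ?(x)) e\<^sup>i\<^sup>x\<^sup>t dx\<close> by parts against
  \<open>d?\<close> gives \<open>t \<integral>\<^sub>0\<^sup>\<infinity> ?(1/x) e\<^sup>i\<^sup>x\<^sup>t dx = i (2 - \<Phi>(t))\<close>.
  The sine and cosine limits are therefore the real and imaginary parts of \<open>\<Phi>(t) \<rightarrow> 0\<close>,
  which is equivalent to \<open>f(t) \<rightarrow> 0\<close> because \<open>1/2 \<le> |1 - e\<^sup>i\<^sup>t/2| \<le> 3/2\<close>; finally
  \<open>f(-t)\<close> is the conjugate of \<open>f(t)\<close>.

  That \<open>?\<close> is a right-continuous distribution function follows from
  \<open>?(1/(n+x)) = 2\<^sup>-\<^sup>n (2 - ?(x))\<close> by an induction on an error bound \<open>2\<^sup>-\<^sup>k\<close>;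
  its bounds come from the alternating series with decreasing weights.
\<close>

section \<open>Continued fractions and the series for \<open>?\<close>\<close>

lemma cf_rem_Suc: "cf_rem x (Suc i) = gauss_map (cf_rem x i)"
  by (simp add: cf_rem_def)

lemma cf_rem_Suc_gauss_map: "cf_rem x (Suc i) = cf_rem (gauss_map x) i"
  by (simp add: cf_rem_def funpow_Suc_right del: funpow.simps)

lemma cf_rem_bounds:
  assumes "0 \<le> x" "x \<le> 1"
  shows "0 \<le> cf_rem x i" "cf_rem x i \<le> 1"
proof (induction i)
  case (Suc i)
  show "0 \<le> cf_rem x (Suc i)" "cf_rem x (Suc i) \<le> 1"
    unfolding cf_rem_Suc gauss_map_def using frac_lt_1 less_imp_le by auto
qed (use assms in \<open>auto simp: cf_rem_def\<close>)

lemma cf_rem_eq_0_mono: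
  assumes "cf_rem x i = 0" "i \<le> j"
  shows "cf_rem x j = 0"
  using assms(2)
proof (induction j rule: dec_induct)
  case (step j)
  then show ?case by (simp add: cf_rem_Suc gauss_map_def)
qed (fact assms(1))

lemma cf_digit_ge_1:
  assumes "0 \<le> x" "x \<le> 1" "cf_rem x i \<noteq> 0"
  shows "1 \<le> cf_digit x i"
proof -
  have "0 < cf_rem x i" "cf_rem x i \<le> 1"
    using cf_rem_bounds[OF assms(1,2), of i] assms(3) by auto
  then have "1 \<le> 1 / cf_rem x i" by simp
  then show ?thesis unfolding cf_digit_def by (simp add: le_floor_iff)
qed

definition cf_weight :: "real \<Rightarrow> nat \<Rightarrow> real" where
  "cf_weight x i = (if cf_rem x i = 0 then 0 else 2 powr - (\<Sum>j\<le>i. cf_digit x j))"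

lemma minkowski_term_eq_cf_weight: "minkowski_term x i = (-1) ^ i * cf_weight x i"
  by (simp add: minkowski_term_def cf_weight_def)

lemma cf_weight_nonneg: "0 \<le> cf_weight x i"
  by (simp add: cf_weight_def)

lemma powr_two_minus_of_nat: "(2::real) powr (- real n) = (1/2) ^ n"
  by (simp add: powr_minus_divide powr_realpow power_one_over)

lemma cf_weight_0_le:
  assumes "0 \<le> x" "x \<le> 1"
  shows "cf_weight x 0 \<le> 1/2"
proof (cases "cf_rem x 0 = 0")
  case False
  then have "2 powr - cf_digit x 0 \<le> 2 powr - real 1"
    using cf_digit_ge_1[OF assms] by (intro powr_mono) auto
  then show ?thesis using False by (simp add: cf_weight_def powr_minus_divide)
qed (simp add: cf_weight_def)

lemma cf_weight_Suc_le:
  assumes "0 \<le> x" "x \<le> 1"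
  shows "cf_weight x (Suc i) \<le> cf_weight x i / 2"
proof (cases "cf_rem x (Suc i) = 0")
  case False
  then have "cf_rem x i \<noteq> 0"
    using cf_rem_eq_0_mono[of x i "Suc i"] by auto
  let ?s = "\<Sum>j\<le>i. cf_digit x j"
  have "2 powr - (?s + cf_digit x (Suc i)) \<le> 2 powr - (?s + 1)"
    using cf_digit_ge_1[OF assms False] by (intro powr_mono) auto
  also have "\<dots> = 2 powr - ?s / 2"
    by (simp add: powr_diff powr_minus_divide)
  finally show ?thesis
    using False \<open>cf_rem x i \<noteq> 0\<close> by (simp add: cf_weight_def add.commute)
qed (simp add: cf_weight_def)

lemma cf_weight_le_power:
  assumes "0 \<le> x" "x \<le> 1"
  shows "cf_weight x i \<le> (1/2) ^ Suc i"
proof (induction i)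
  case 0
  then show ?case using cf_weight_0_le[OF assms] by simp
next
  case (Suc i)
  then show ?case using cf_weight_Suc_le[OF assms, of i] by simp
qed

lemma minkowski_term_summable_bounds:
  assumes "0 \<le> x" "x \<le> 1"
  shows "summable (minkowski_term x)" "0 \<le> (\<Sum>i. minkowski_term x i)" "(\<Sum>i. minkowski_term x i) \<le> 1/2"
proof -
  have lim: "cf_weight x \<longlonglongrightarrow> 0"
  proof (rule tendsto_sandwich[OF always_eventually always_eventually tendsto_const])
    show "(\<lambda>i. (1/2::real) ^ Suc i) \<longlonglongrightarrow> 0"
      by (rule LIMSEQ_Suc, rule LIMSEQ_power_zero) simp
  qed (use cf_weight_nonneg cf_weight_le_power[OF assms] in auto)
  have decr: "cf_weight x (Suc i) \<le> cf_weight x i" for i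
    using cf_weight_Suc_le[OF assms, of i] cf_weight_nonneg[of x i] by linarith
  note Leibniz = summable_Leibniz'[OF lim cf_weight_nonneg decr]
  have alternating: "minkowski_term x = (\<lambda>i. (-1) ^ i * cf_weight x i)"
    by (simp add: fun_eq_iff minkowski_term_eq_cf_weight)
  show "summable (minkowski_term x)"
    unfolding alternating by (rule Leibniz(1))
  show "0 \<le> (\<Sum>i. minkowski_term x i)"
    unfolding alternating using Leibniz(2)[of 0] by simp
  show "(\<Sum>i. minkowski_term x i) \<le> 1/2"
    unfolding alternating using Leibniz(4)[of 0] cf_weight_0_le[OF assms] by simp
qed

lemma cf_rem_of_0 [simp]: "cf_rem 0 i = 0"
  by (induction i) (simp_all add: cf_rem_Suc gauss_map_def cf_rem_def)

lemma minkowski01_0 [simp]: "minkowski01 0 = 0"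
  and minkowski01_1 [simp]: "minkowski01 1 = 1"
  by (simp_all add: minkowski01_def)

lemma minkowski01_eq_suminf:
  assumes "0 \<le> x" "x < 1"
  shows "minkowski01 x = 2 * (\<Sum>i. minkowski_term x i)"
proof (cases "x = 0")
  case True
  then show ?thesis by (simp add: minkowski_term_def)
qed (use assms in \<open>simp add: minkowski01_def\<close>)

lemma minkowski01_bounds:
  assumes "0 \<le> x" "x \<le> 1"
  shows "0 \<le> minkowski01 x" "minkowski01 x \<le> 1"
  using minkowski_term_summable_bounds[OF assms] by (auto simp: minkowski01_def)

section \<open>The functional equation of \<open>?\<close>\<close>

lemma cf_weight_recip_add:
  assumes "1 \<le> n" "0 \<le> x" "x < 1"
  shows "cf_weight (1 / (real n + x)) 0 = (1/2) ^ n"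
    and "cf_weight (1 / (real n + x)) (Suc i) = (1/2) ^ n * cf_weight x i"
proof -
  define y where "y = 1 / (real n + x)"
  have "1 \<le> real n + x" using assms by simp
  then have y: "y \<noteq> 0" "1 / y = real n + x" by (auto simp: y_def)
  have "frac (real n + x) = x"
    using assms by (simp add: frac_unique_iff)
  then have rem: "cf_rem y (Suc i) = cf_rem x i" for i
    using y by (simp add: cf_rem_Suc_gauss_map gauss_map_def)
  have digit0: "cf_digit y 0 = real n"
    using assms y by (simp add: cf_digit_def cf_rem_def floor_eq_iff)
  have digits: "(\<Sum>j\<le>Suc i. cf_digit y j) = real n + (\<Sum>j\<le>i. cf_digit x j)"
    unfolding sum.atMost_Suc_shift digit0 by (simp add: cf_digit_def rem)
  show "cf_weight (1 / (real n + x)) 0 = (1/2) ^ n"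
    using y by (simp add: cf_weight_def y_def[symmetric] cf_rem_def digit0 powr_two_minus_of_nat)
  show "cf_weight (1 / (real n + x)) (Suc i) = (1/2) ^ n * cf_weight x i"
  proof -
    have "2 powr - (real n + s) = (1/2) ^ n * 2 powr - s" for s :: real
      by (simp add: powr_add[symmetric] powr_two_minus_of_nat[symmetric])
    then show ?thesis
      unfolding y_def[symmetric] cf_weight_def rem digits by simp
  qed
qed

lemma minkowski01_recip_add:
  assumes "1 \<le> n" "0 \<le> x" "x \<le> 1"
  shows "minkowski01 (1 / (real n + x)) = (1/2) ^ n * (2 - minkowski01 x)"
proof -
  have main: "minkowski01 (1 / (real m + u)) = (1/2) ^ m * (2 - minkowski01 u)"
    if m: "1 \<le> m" and u: "0 \<le> u" "u < 1" for m u
  proof (cases "m = 1 \<and> u = 0")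
    case False
    define y where "y = 1 / (real m + u)"
    have y: "0 \<le> y" "y < 1" using m u False by (auto simp: y_def)
    have shift: "(\<lambda>i. minkowski_term y (Suc i)) = (\<lambda>i. - ((1/2) ^ m) * minkowski_term u i)"
      by (simp add: fun_eq_iff minkowski_term_eq_cf_weight y_def cf_weight_recip_add[OF m u])
    have head: "minkowski_term y 0 = (1/2) ^ m"
      by (simp add: minkowski_term_eq_cf_weight y_def cf_weight_recip_add[OF m u])
    have "(\<Sum>i. minkowski_term y i) = minkowski_term y 0 + (\<Sum>i. minkowski_term y (Suc i))"
      using suminf_split_head[OF minkowski_term_summable_bounds(1)] y by simp
    also have "\<dots> = (1/2) ^ m - (1/2) ^ m * (\<Sum>i. minkowski_term u i)"
      unfolding shift head suminf_mult[OF minkowski_term_summable_bounds(1)[OF u(1) less_imp_le[OF u(2)]]]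
      by simp
    finally show ?thesis
      using minkowski01_eq_suminf[OF y] minkowski01_eq_suminf[OF u] unfolding y_def[symmetric]
      by (simp add: algebra_simps)
  qed simp
  show ?thesis
  proof (cases "x = 1")
    case True
    then show ?thesis using main[of "Suc n" 0] by (simp add: add.commute)
  qed (use main assms in auto)
qed

lemma unit_interval_recip_floor:
  assumes "0 < x" "x \<le> 1"
  obtains n r where "1 \<le> n" "0 \<le> r" "r < 1" "x = 1 / (real n + r)"
proof
  have "1 \<le> \<lfloor>1 / x\<rfloor>" using assms by (simp add: le_floor_iff)
  then show "1 \<le> nat \<lfloor>1 / x\<rfloor>" by arith
  show "0 \<le> frac (1 / x)" "frac (1 / x) < 1"
    by (auto simp: frac_lt_1)
  show "x = 1 / (real (nat \<lfloor>1 / x\<rfloor>) + frac (1 / x))"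
    using assms by (simp add: frac_def le_floor_iff)
qed

lemma unit_interval_recip_ceiling:
  assumes "0 < x" "x < 1"
  obtains n r where "1 \<le> n" "0 < r" "r \<le> 1" "x = 1 / (real n + r)"
proof
  have "1 < 1 / x" using assms by simp
  then have "2 \<le> \<lceil>1 / x\<rceil>" by linarith
  then show "1 \<le> nat \<lceil>1 / x\<rceil> - 1" by linarith
  show "0 < 1 / x - real (nat \<lceil>1 / x\<rceil> - 1)" "1 / x - real (nat \<lceil>1 / x\<rceil> - 1) \<le> 1"
    using \<open>2 \<le> \<lceil>1 / x\<rceil>\<close> by (simp_all add: of_nat_diff) linarith+
  show "x = 1 / (real (nat \<lceil>1 / x\<rceil> - 1) + (1 / x - real (nat \<lceil>1 / x\<rceil> - 1)))"
    using assms by simp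
qed

lemma minkowski01_recip_add_bounds:
  assumes "1 \<le> n" "0 \<le> r" "r \<le> 1"
  shows "(1/2) ^ n \<le> minkowski01 (1 / (real n + r))" "minkowski01 (1 / (real n + r)) \<le> 2 * (1/2) ^ n"
  using minkowski01_recip_add[OF assms] minkowski01_bounds[OF assms(2,3)]
  by (simp_all add: mult_le_cancel_left1)

lemma minkowski01_recip_add_le:
  assumes "1 \<le> n" "0 \<le> r" "r \<le> 1" "0 \<le> s" "s \<le> 1" "0 \<le> e"
    and "minkowski01 s \<le> minkowski01 r + e"
  shows "minkowski01 (1 / (real n + r)) \<le> minkowski01 (1 / (real n + s)) + e / 2"
proof -
  have "(1/2::real) ^ n \<le> 1/2"
    using power_decreasing[of 1 n "1/2::real"] assms(1) by simp
  then have "(1/2) ^ n * e \<le> e / 2"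
    using mult_right_mono[OF _ assms(6)] by fastforce
  moreover have "(1/2) ^ n * (2 - minkowski01 r) \<le> (1/2) ^ n * (2 - minkowski01 s + e)"
    using assms(7) by (intro mult_left_mono) auto
  ultimately show ?thesis
    unfolding minkowski01_recip_add[OF assms(1-3)] minkowski01_recip_add[OF assms(1,4,5)]
    by (simp add: algebra_simps)
qed

lemma minkowski01_le_add_power:
  assumes "0 \<le> x" "x \<le> y" "y \<le> 1"
  shows "minkowski01 x \<le> minkowski01 y + 1 / 2 ^ k"
  using assms
proof (induction k arbitrary: x y)
  case 0
  then show ?case using minkowski01_bounds[of x] minkowski01_bounds[of y] by simp
next
  case (Suc k)
  show ?case
  proof (cases "x = 0")
    case True
    then show ?thesis using minkowski01_bounds[of y] Suc.prems by simp
  next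
    case False
    then obtain nx rx where x: "1 \<le> nx" "0 \<le> rx" "rx < 1" "x = 1 / (real nx + rx)"
      using unit_interval_recip_floor[of x] Suc.prems by auto
    obtain ny ry where y: "1 \<le> ny" "0 \<le> ry" "ry < 1" "y = 1 / (real ny + ry)"
      using unit_interval_recip_floor[of y] Suc.prems False by auto
    have "real ny + ry \<le> real nx + rx"
      using Suc.prems(2) x y inverse_le_iff_le[of "real nx + rx" "real ny + ry"]
      by (simp add: inverse_eq_divide)
    then consider "ny < nx" | "ny = nx" "ry \<le> rx"
      using x(2,3) y(2,3) by linarith
    then show ?thesis
    proof cases
      case 1
      then have "2 * (1/2::real) ^ nx \<le> (1/2) ^ ny"
        using power_decreasing[of "Suc ny" nx "1/2::real"] by simp
      moreover have "0 \<le> 1 / (2::real) ^ Suc k" by simp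
      ultimately show ?thesis
        unfolding x(4) y(4)
        using minkowski01_recip_add_bounds[OF x(1-2) less_imp_le[OF x(3)]]
          minkowski01_recip_add_bounds[OF y(1-2) less_imp_le[OF y(3)]]
        by linarith
    next
      case 2
      have "minkowski01 ry \<le> minkowski01 rx + 1 / 2 ^ k"
        using Suc.IH 2 x y by simp
      from minkowski01_recip_add_le[OF x(1,2) _ y(2) _ _ this]
      show ?thesis using x y 2 by simp
    qed
  qed
qed

lemma minkowski01_mono:
  assumes "0 \<le> x" "x \<le> y" "y \<le> 1"
  shows "minkowski01 x \<le> minkowski01 y"
proof (rule field_le_epsilon)
  fix e :: real assume "0 < e"
  then obtain k where "1 / 2 ^ k < e"
    using real_arch_pow_inv[of e "1/2::real"] by (auto simp: power_one_over)
  then show "minkowski01 x \<le> minkowski01 y + e"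
    using minkowski01_le_add_power[OF assms, of k] by simp
qed

lemma minkowski01_approx_from_right_step:
  assumes from_left: "\<And>r. 0 < r \<Longrightarrow> r \<le> 1 \<Longrightarrow> \<exists>r'. 0 \<le> r' \<and> r' < r \<and> minkowski01 r \<le> minkowski01 r' + e"
    and "0 \<le> e" "0 < x" "x < 1"
  shows "\<exists>y. x < y \<and> y \<le> 1 \<and> minkowski01 y \<le> minkowski01 x + e / 2"
proof -
  obtain n r where nr: "1 \<le> n" "0 < r" "r \<le> 1" "x = 1 / (real n + r)"
    using unit_interval_recip_ceiling[of x] assms(3,4) by auto
  obtain r' where r': "0 \<le> r'" "r' < r" "minkowski01 r \<le> minkowski01 r' + e"
    using from_left[of r] nr by auto
  show ?thesis
  proof (intro exI conjI)
    show "x < 1 / (real n + r')" "1 / (real n + r') \<le> 1"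
      using nr r' by (auto intro: divide_strict_left_mono)
    show "minkowski01 (1 / (real n + r')) \<le> minkowski01 x + e / 2"
      using minkowski01_recip_add_le[OF nr(1) r'(1) _ _ nr(3) \<open>0 \<le> e\<close> r'(3)] nr r' by simp
  qed
qed

lemma minkowski01_approx_from_left_step:
  assumes from_right: "\<And>r. 0 \<le> r \<Longrightarrow> r < 1 \<Longrightarrow> \<exists>r'. r < r' \<and> r' \<le> 1 \<and> minkowski01 r' \<le> minkowski01 r + e"
    and "0 \<le> e" "0 < x" "x \<le> 1"
  shows "\<exists>y. 0 \<le> y \<and> y < x \<and> minkowski01 x \<le> minkowski01 y + e / 2"
proof -
  obtain n r where nr: "1 \<le> n" "0 \<le> r" "r < 1" "x = 1 / (real n + r)"
    using unit_interval_recip_floor[of x] assms(3,4) by auto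
  obtain r' where r': "r < r'" "r' \<le> 1" "minkowski01 r' \<le> minkowski01 r + e"
    using from_right[of r] nr by auto
  show ?thesis
  proof (intro exI conjI)
    show "0 \<le> 1 / (real n + r')" "1 / (real n + r') < x"
      using nr r' by (auto intro: divide_strict_left_mono)
    show "minkowski01 x \<le> minkowski01 (1 / (real n + r')) + e / 2"
      using minkowski01_recip_add_le[OF nr(1,2) _ _ r'(2) \<open>0 \<le> e\<close> r'(3)] nr r' by simp
  qed
qed

text \<open>Both one-sided approximations are proved together: \<open>x \<mapsto> 1/(n+x)\<close> reverses order,
  so approximating \<open>1/(n+r)\<close> from the right needs an approximation of \<open>r\<close> from the left.\<close>
lemma minkowski01_one_sided_approx:
  "(\<forall>x. 0 \<le> x \<and> x < 1 \<longrightarrow> (\<exists>y. x < y \<and> y \<le> 1 \<and> minkowski01 y \<le> minkowski01 x + 1 / 2 ^ k)) \<and>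
   (\<forall>x. 0 < x \<and> x \<le> 1 \<longrightarrow> (\<exists>y. 0 \<le> y \<and> y < x \<and> minkowski01 x \<le> minkowski01 y + 1 / 2 ^ k))"
proof (induction k)
  case 0
  show ?case
  proof (intro conjI allI impI)
    fix x :: real assume "0 \<le> x \<and> x < 1"
    then show "\<exists>y. x < y \<and> y \<le> 1 \<and> minkowski01 y \<le> minkowski01 x + 1 / 2 ^ 0"
      using minkowski01_bounds[of x] by (intro exI[of _ 1]) auto
  next
    fix x :: real assume "0 < x \<and> x \<le> 1"
    then show "\<exists>y. 0 \<le> y \<and> y < x \<and> minkowski01 x \<le> minkowski01 y + 1 / 2 ^ 0"
      using minkowski01_bounds[of x] by (intro exI[of _ 0]) auto
  qed
next
  case (Suc k)
  have halve: "1 / 2 ^ k / 2 = 1 / (2::real) ^ Suc k" by simp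
  have e: "0 \<le> 1 / (2::real) ^ k" by simp
  note from_right = Suc.IH[THEN conjunct1, rule_format]
  note from_left = Suc.IH[THEN conjunct2, rule_format]
  show ?case
  proof (intro conjI allI impI)
    fix x :: real assume x: "0 \<le> x \<and> x < 1"
    show "\<exists>y. x < y \<and> y \<le> 1 \<and> minkowski01 y \<le> minkowski01 x + 1 / 2 ^ Suc k"
    proof (cases "x = 0")
      case True
      have "minkowski01 (1 / (real (k + 2) + 0)) = 1 / 2 ^ Suc k"
        using minkowski01_recip_add[of "k + 2" 0] by (simp add: power_one_over)
      then show ?thesis using True by (intro exI[of _ "1 / real (k + 2)"]) auto
    next
      case False
      then show ?thesis
        using minkowski01_approx_from_right_step[OF from_left e] x unfolding halve by simp
    qed
  next
    fix x :: real assume "0 < x \<and> x \<le> 1"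
    then show "\<exists>y. 0 \<le> y \<and> y < x \<and> minkowski01 x \<le> minkowski01 y + 1 / 2 ^ Suc k"
      using minkowski01_approx_from_left_step[OF from_right e] unfolding halve by simp
  qed
qed

lemma minkowski_inv_eq_unit_interval:
  assumes "0 \<le> x" "x \<le> 1"
  shows "minkowski_inv x = 2 - minkowski01 x"
  using assms by (cases "x = 0 \<or> x = 1") (auto simp: minkowski_inv_def minkowski_def)

lemma minkowski_inv_ge_1: "1 \<le> x \<Longrightarrow> minkowski_inv x = minkowski01 (1 / x)"
  by (simp add: minkowski_inv_def minkowski_def)

lemma minkowski_inv_add_1:
  assumes "0 \<le> x"
  shows "minkowski_inv (x + 1) = minkowski_inv x / 2"
proof (cases "x \<le> 1")
  case True
  then show ?thesis
    using assms minkowski01_recip_add[of 1 x] minkowski_inv_eq_unit_interval[of x]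
    by (simp add: minkowski_inv_def minkowski_def add.commute)
next
  case False
  define n where "n = nat \<lfloor>x\<rfloor>"
  have n: "1 \<le> n" "x = real n + frac x"
    using False by (auto simp: n_def frac_def le_nat_iff le_floor_iff)
  have x1: "x + 1 = real (Suc n) + frac x"
    using n(2) by simp
  have "minkowski_inv (x + 1) = minkowski01 (1 / (real (Suc n) + frac x))"
    unfolding x1[symmetric] using assms by (intro minkowski_inv_ge_1) simp
  also have "\<dots> = minkowski01 (1 / (real n + frac x)) / 2"
    using minkowski01_recip_add[of "Suc n" "frac x"] minkowski01_recip_add[OF n(1), of "frac x"]
    by (simp add: frac_lt_1 less_imp_le)
  also have "\<dots> = minkowski_inv x / 2"
    using False minkowski_inv_ge_1[of x] n(2) by simp
  finally show ?thesis .
qed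

lemma mono_continuous_at_right:
  fixes F :: "real \<Rightarrow> real"
  assumes "mono F" and approx: "\<And>e. 0 < e \<Longrightarrow> \<exists>y>a. F y < F a + e"
  shows "continuous (at_right a) F"
  unfolding continuous_within order_tendsto_iff
proof (intro conjI allI impI)
  fix l assume "l < F a"
  have above: "l < F x" if "a < x" for x
    using monoD[OF \<open>mono F\<close>, of a x] that \<open>l < F a\<close> by simp
  show "\<forall>\<^sub>F x in at_right a. l < F x"
    by (rule eventually_mono[OF eventually_at_right_less above])
next
  fix u assume "F a < u"
  then obtain y where "a < y" "F y < u"
    using approx[of "u - F a"] by auto
  have below: "F x < u" if "x < y" for x
    using monoD[OF \<open>mono F\<close>, of x y] that \<open>F y < u\<close> by simp
  show "\<forall>\<^sub>F x in at_right a. F x < u"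
    unfolding eventually_at_right[OF \<open>a < y\<close>] using \<open>a < y\<close> below by blast
qed

lemma borel_measurable_cis_mult [measurable]: "(\<lambda>x. cis (x * t)) \<in> borel_measurable borel"
  by (intro borel_measurable_continuous_onI continuous_intros)

lemma set_integral_cis_atLeastLessThan:
  assumes "t \<noteq> 0" "a \<le> b"
  shows "(LINT x:{a..<b}|lborel. cis (x * t)) = (cis (b * t) - cis (a * t)) / (\<i> * of_real t)"
proof -
  have deriv: "((\<lambda>x. cis (x * t) / (\<i> * of_real t)) has_vector_derivative cis (x * t)) (at x within S)"
    for x S
  proof -
    have "((\<lambda>x. cis (x * t) / (\<i> * of_real t)) has_derivative
        (\<lambda>h. (h * t) *\<^sub>R (\<i> * cis (x * t)) / (\<i> * of_real t))) (at x within S)"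
      by (intro bounded_linear.has_derivative[OF bounded_linear_divide] has_derivative_cis
          derivative_intros)
    moreover have "(\<lambda>h. (h * t) *\<^sub>R (\<i> * cis (x * t)) / (\<i> * of_real t)) = (\<lambda>h. h *\<^sub>R cis (x * t))"
      using assms(1) by (auto simp: scaleR_conv_of_real field_simps)
    ultimately show ?thesis by (simp add: has_vector_derivative_def)
  qed
  have "(LBINT x=ereal a..ereal b. cis (x * t)) = cis (b * t) / (\<i> * of_real t) - cis (a * t) / (\<i> * of_real t)"
    by (rule interval_integral_FTC_finite) (auto intro!: continuous_intros deriv)
  moreover have "(LBINT x=ereal a..ereal b. cis (x * t)) = (LINT x:{a..b}|lborel. cis (x * t))"
    using assms(2) by (rule interval_integral_Icc)
  moreover have "(LINT x:{a..b}|lborel. cis (x * t)) = (LINT x:{a..<b}|lborel. cis (x * t))"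
  proof (rule set_integral_cong_set)
    show "AE x in lborel. (x \<in> {a..<b}) = (x \<in> {a..b})"
      using AE_lborel_singleton[of b] by eventually_elim auto
  qed (auto simp: set_borel_measurable_def)
  ultimately show ?thesis by (simp add: diff_divide_distrib)
qed

lemma emeasure_interval_measure_Ioc_finite:
  fixes F :: "real \<Rightarrow> real"
  assumes "mono F" "\<And>x. continuous (at_right x) F"
  shows "emeasure (interval_measure F) {x<..y} < \<infinity>"
  using emeasure_interval_measure_Ioc[of x y F] monoD[OF assms(1)] assms(2)
  by (cases "x \<le> y") auto

text \<open>Fubini on the triangle \<open>a \<le> x < y \<le> b\<close>, using \<open>\<mu>(x, b] = F b - F x\<close>.\<close>
lemma set_integral_interval_measure_tail:
  fixes F :: "real \<Rightarrow> real" and \<phi> :: "real \<Rightarrow> 'a::{banach, second_countable_topology}"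
  assumes mono: "mono F" and right_cont: "\<And>x. continuous (at_right x) F" and "a \<le> b"
    and [measurable]: "\<phi> \<in> borel_measurable borel" and bound: "\<And>x. norm (\<phi> x) \<le> B"
  shows "(LINT x:{a..<b}|lborel. (F b - F x) *\<^sub>R \<phi> x) =
    (LINT y:{a<..b}|interval_measure F. (LINT x:{a..<y}|lborel. \<phi> x))"
proof -
  let ?\<mu> = "interval_measure F"
  have F_mono: "\<And>x y. x \<le> y \<Longrightarrow> F x \<le> F y"
    using mono by (simp add: monoD)
  have \<mu>_Ioc: "measure ?\<mu> {x<..y} = F y - F x" if "x \<le> y" for x y
    using that F_mono right_cont by (rule measure_interval_measure_Ioc)
  note \<mu>_Ioc_finite = emeasure_interval_measure_Ioc_finite[OF mono right_cont]
  interpret pair_sigma_finite lborel ?\<mu>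
    unfolding pair_sigma_finite_def
    using sigma_finite_interval_measure[of F] F_mono right_cont lborel.sigma_finite_measure_axioms
    by auto
  define f where "f x y = (indicator {a..<b} x * indicator {x<..b} y :: real) *\<^sub>R \<phi> x" for x y
  have B_nonneg: "0 \<le> B"
    using norm_ge_zero[of "\<phi> a"] bound[of a] by linarith
  have "integrable (lborel \<Otimes>\<^sub>M ?\<mu>) (case_prod f)"
  proof (rule integrableI_bounded_set[where A="{a..b} \<times> {a<..b}" and B=B])
    have "case_prod f = (\<lambda>p. (if a \<le> fst p \<and> fst p < b \<and> fst p < snd p \<and> snd p \<le> b then 1 else 0::real)
        *\<^sub>R \<phi> (fst p))"
      by (auto simp: f_def fun_eq_iff indicator_def)
    then show "case_prod f \<in> borel_measurable (lborel \<Otimes>\<^sub>M ?\<mu>)" by simp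
    have "emeasure (lborel \<Otimes>\<^sub>M ?\<mu>) ({a..b} \<times> {a<..b}) = emeasure lborel {a..b} * emeasure ?\<mu> {a<..b}"
      by (rule M2.emeasure_pair_measure_Times) auto
    then show "emeasure (lborel \<Otimes>\<^sub>M ?\<mu>) ({a..b} \<times> {a<..b}) < \<infinity>"
      using \<mu>_Ioc_finite[of a b] \<open>a \<le> b\<close> by (simp add: ennreal_mult_less_top)
  qed (use B_nonneg in \<open>auto intro!: AE_I2 simp: f_def indicator_def bound\<close>)
  then have Fubini: "(\<integral>x. (\<integral>y. f x y \<partial>?\<mu>) \<partial>lborel) = (\<integral>y. (\<integral>x. f x y \<partial>lborel) \<partial>?\<mu>)"
    by (rule Fubini_integral[symmetric])
  have inner_\<mu>: "(\<integral>y. f x y \<partial>?\<mu>) = indicator {a..<b} x *\<^sub>R ((F b - F x) *\<^sub>R \<phi> x)" for x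
  proof (cases "a \<le> x \<and> x < b")
    case True
    have "(\<integral>y. f x y \<partial>?\<mu>) = (\<integral>y. indicator {x<..b} y *\<^sub>R \<phi> x \<partial>?\<mu>)"
      unfolding f_def using True by simp
    also have "\<dots> = (\<integral>y. indicator {x<..b} y \<partial>?\<mu>) *\<^sub>R \<phi> x"
      by (rule integral_scaleR_left) (auto intro: integrable_real_indicator \<mu>_Ioc_finite)
    also have "(\<integral>y. indicator {x<..b} y \<partial>?\<mu>) = F b - F x"
      using True \<mu>_Ioc[of x b] by simp
    finally show ?thesis using True by simp
  qed (simp add: f_def)
  have inner_lborel: "(\<integral>x. f x y \<partial>lborel) = indicator {a<..b} y *\<^sub>R (LINT x:{a..<y}|lborel. \<phi> x)" for y
  proof (cases "a < y \<and> y \<le> b")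
    case True
    then have "(\<lambda>x. f x y) = (\<lambda>x. indicator {a..<y} x *\<^sub>R \<phi> x)"
      by (auto simp: f_def fun_eq_iff indicator_def)
    then show ?thesis
      using True by (simp add: set_lebesgue_integral_def)
  next
    case False
    then have "(\<lambda>x. f x y) = (\<lambda>x. 0)"
      by (auto simp: f_def fun_eq_iff indicator_def)
    then show ?thesis using False by simp
  qed
  show ?thesis
    using Fubini unfolding inner_\<mu> inner_lborel set_lebesgue_integral_def .
qed

lemma set_integral_interval_measure_tail_cis:
  fixes F :: "real \<Rightarrow> real"
  assumes mono: "mono F" and right_cont: "\<And>x. continuous (at_right x) F"
    and "t \<noteq> 0" "a \<le> b"
  shows "(LINT x:{a..<b}|lborel. complex_of_real (F b - F x) * cis (x * t)) =
    ((LINT y:{a<..b}|interval_measure F. cis (y * t)) - of_real (F b - F a) * cis (a * t)) / (\<i> * of_real t)"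
proof -
  let ?\<mu> = "interval_measure F"
  have F_mono: "\<And>x y. x \<le> y \<Longrightarrow> F x \<le> F y"
    using mono by (simp add: monoD)
  note \<mu>_Ioc_finite = emeasure_interval_measure_Ioc_finite[OF mono right_cont, of a b]
  have integrable_\<mu>: "set_integrable ?\<mu> {a<..b} (g :: real \<Rightarrow> complex)"
    if "g \<in> borel_measurable borel" "\<And>y. norm (g y) \<le> 1" for g
    unfolding set_integrable_def using that \<mu>_Ioc_finite
    by (intro integrableI_bounded_set_indicator[where B=1]) auto
  have "(LINT x:{a..<b}|lborel. complex_of_real (F b - F x) * cis (x * t)) =
      (LINT y:{a<..b}|?\<mu>. (LINT x:{a..<y}|lborel. cis (x * t)))"
    using set_integral_interval_measure_tail[OF assms(1,2,4), of "\<lambda>x. cis (x * t)" 1]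
    by (simp add: scaleR_conv_of_real)
  also have "\<dots> = (LINT y:{a<..b}|?\<mu>. (cis (y * t) - cis (a * t)) / (\<i> * of_real t))"
    by (intro set_lebesgue_integral_cong) (auto simp: set_integral_cis_atLeastLessThan[OF \<open>t \<noteq> 0\<close>])
  also have "\<dots> = ((LINT y:{a<..b}|?\<mu>. cis (y * t)) - (LINT y:{a<..b}|?\<mu>. cis (a * t))) / (\<i> * of_real t)"
    using integrable_\<mu> by simp
  also have "(LINT y:{a<..b}|?\<mu>. cis (a * t)) = of_real (F b - F a) * cis (a * t)"
    using measure_interval_measure_Ioc[OF \<open>a \<le> b\<close> F_mono right_cont] \<mu>_Ioc_finite
    by (simp add: set_integral_const scaleR_conv_of_real)
  finally show ?thesis .
qed

lemma shift_one_iterate: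
  fixes g :: "real \<Rightarrow> 'a::monoid_mult"
  assumes shift: "\<And>x. 0 \<le> x \<Longrightarrow> g (x + 1) = q * g x" and "0 \<le> x"
  shows "g (real n + x) = q ^ n * g x"
proof (induction n)
  case (Suc n)
  have "g (real (Suc n) + x) = q * g (real n + x)"
    using shift[of "real n + x"] \<open>0 \<le> x\<close> by (simp add: add_ac)
  then show ?case using Suc.IH by (simp add: mult.assoc)
qed simp

lemma indicator_unit_interval_nat_floor:
  "indicator {real n..<real n + 1} x = (if n = nat \<lfloor>x\<rfloor> then indicator {0..} x else (0::real))"
proof (cases "0 \<le> x")
  case True
  have "real n \<le> x \<and> x < real n + 1 \<longleftrightarrow> \<lfloor>x\<rfloor> = int n"
    by (simp add: floor_eq_iff)
  also have "\<dots> \<longleftrightarrow> n = nat \<lfloor>x\<rfloor>"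
    using True by auto
  finally have "real n \<le> x \<and> x < real n + 1 \<longleftrightarrow> n = nat \<lfloor>x\<rfloor>" .
  then show ?thesis using True by (simp add: indicator_def)
qed (simp add: indicator_def)

lemma set_integral_geometric_shift:
  fixes g :: "real \<Rightarrow> 'a::{real_normed_field, banach, second_countable_topology}"
  assumes shift: "\<And>x. 0 \<le> x \<Longrightarrow> g (x + 1) = q * g x" and q: "norm q < 1"
    and meas: "set_borel_measurable lborel {0..<1} g"
    and bound: "\<And>x. 0 \<le> x \<Longrightarrow> x < 1 \<Longrightarrow> norm (g x) \<le> B"
  shows "set_integrable lborel {0..} g"
    and "(LINT x:{0..}|lborel. g x) = (LINT x:{0..<1}|lborel. g x) / (1 - q)"
proof -
  define \<phi> where "\<phi> x = indicator {0..<1} x *\<^sub>R g x" for x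
  define h where "h n x = indicator {real n..<real n + 1} x *\<^sub>R g x" for n x
  have \<phi>_integrable: "integrable lborel \<phi>"
  proof (rule integrableI_bounded_set[where A="{0..<1}" and B=B])
    show "\<phi> \<in> borel_measurable lborel"
      using meas unfolding set_borel_measurable_def \<phi>_def[abs_def] by simp
  qed (auto simp: \<phi>_def bound)
  have h_shift: "h n (real n + x) = q ^ n * \<phi> x" for n x
    using shift_one_iterate[of g q x n] shift
    by (auto simp: h_def \<phi>_def indicator_def)
  have h_eq: "h n = (\<lambda>x. q ^ n * \<phi> (- real n + 1 * x))" for n
    using h_shift[of n] by (simp add: fun_eq_iff) (metis add_diff_cancel_left' diff_add_cancel)
  have h_integrable: "integrable lborel (h n)" for n
    unfolding h_eq using lborel_integrable_real_affine[OF \<phi>_integrable, of 1 "- real n"]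
    by (intro integrable_mult_right) simp
  have h_integral: "integral\<^sup>L lborel (h n) = q ^ n * integral\<^sup>L lborel \<phi>" for n
    using lborel_integral_real_affine[of 1 "h n" "real n"] by (simp add: h_shift)
  have h_norm_integral: "(\<integral>x. norm (h n x) \<partial>lborel) = norm q ^ n * (\<integral>x. norm (\<phi> x) \<partial>lborel)" for n
    using lborel_integral_real_affine[of 1 "\<lambda>x. norm (h n x)" "real n"]
    by (simp add: h_shift norm_mult norm_power)
  have h_single: "h n x = (if n = nat \<lfloor>x\<rfloor> then indicator {0..} x *\<^sub>R g x else 0)" for n x
    by (simp add: h_def indicator_unit_interval_nat_floor)
  have sum_h: "(\<Sum>n. h n x) = indicator {0..} x *\<^sub>R g x" for x
    unfolding h_single by (rule sums_unique[symmetric]) (rule sums_single)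
  have pointwise: "AE x in lborel. summable (\<lambda>n. norm (h n x))"
  proof (rule AE_I2)
    fix x
    have "(\<lambda>n. norm (h n x)) = (\<lambda>n. if n = nat \<lfloor>x\<rfloor> then norm (indicator {0..} x *\<^sub>R g x) else 0)"
      by (simp add: h_single fun_eq_iff)
    then show "summable (\<lambda>n. norm (h n x))" by (simp add: summable_single)
  qed
  have "summable (\<lambda>n. \<integral>x. norm (h n x) \<partial>lborel)"
    unfolding h_norm_integral using q by (intro summable_mult2 summable_geometric) simp
  note h_series = integrable_suminf[OF h_integrable pointwise this] sums_integral[OF h_integrable pointwise this]
  show "set_integrable lborel {0..} g"
    using h_series(1) by (simp add: set_integrable_def sum_h)
  have "(\<lambda>n. q ^ n * integral\<^sup>L lborel \<phi>) sums (LINT x:{0..}|lborel. g x)"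
    using h_series(2) by (simp add: set_lebesgue_integral_def sum_h h_integral)
  moreover have "(\<lambda>n. q ^ n * integral\<^sup>L lborel \<phi>) sums (integral\<^sup>L lborel \<phi> / (1 - q))"
    using sums_mult2[OF geometric_sums[OF q]] by (simp add: divide_inverse mult.commute)
  ultimately show "(LINT x:{0..}|lborel. g x) = (LINT x:{0..<1}|lborel. g x) / (1 - q)"
    unfolding set_lebesgue_integral_def \<phi>_def[abs_def] by (rule sums_unique2)
qed

lemma set_integrable_bounded_atLeastLessThan:
  fixes g :: "real \<Rightarrow> 'a::{banach, second_countable_topology}"
  assumes "g \<in> borel_measurable borel" "\<And>x. norm (g x) \<le> B"
  shows "set_integrable lborel {a..<b} g"
proof -
  have "emeasure lborel {a..<b} < \<infinity>"
    by (cases "a \<le> b") auto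
  then show ?thesis
    unfolding set_integrable_def using assms
    by (intro integrableI_bounded_set_indicator[where B=B]) auto
qed

lemma set_integral_Re_Im:
  fixes f :: "_ \<Rightarrow> complex"
  assumes "set_integrable M A f"
  shows "(LINT x:A|M. Re (f x)) = Re (LINT x:A|M. f x)"
    and "(LINT x:A|M. Im (f x)) = Im (LINT x:A|M. f x)"
  using assms unfolding set_lebesgue_integral_def set_integrable_def
  by (simp_all flip: integral_Re integral_Im)

lemma set_integral_greaterThan_atLeast:
  fixes g :: "real \<Rightarrow> 'a::{banach, second_countable_topology}"
  assumes "set_integrable lborel {a..} g"
  shows "set_integrable lborel {a<..} g"
    and "(LINT x:{a<..}|lborel. g x) = (LINT x:{a..}|lborel. g x)"
proof -
  show integrable: "set_integrable lborel {a<..} g"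
    using assms by (rule set_integrable_subset) auto
  show "(LINT x:{a<..}|lborel. g x) = (LINT x:{a..}|lborel. g x)"
  proof (rule set_integral_cong_set)
    show "set_borel_measurable lborel {a..} g" "set_borel_measurable lborel {a<..} g"
      using assms integrable by (auto simp: set_borel_measurable_def set_integrable_def)
    show "AE x in lborel. (x \<in> {a..}) = (x \<in> {a<..})"
      using AE_lborel_singleton[of a] by eventually_elim auto
  qed
qed

lemma tendsto_zero_divide_bounded_below_iff:
  fixes f w :: "'b \<Rightarrow> 'a::real_normed_field"
  assumes "0 < c" "\<And>x. c \<le> norm (w x)" "\<And>x. norm (w x) \<le> C"
  shows "((\<lambda>x. f x / w x) \<longlongrightarrow> 0) F \<longleftrightarrow> (f \<longlongrightarrow> 0) F"
proof
  assume lim: "((\<lambda>x. f x / w x) \<longlongrightarrow> 0) F"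
  have bound: "norm (f x) \<le> norm (f x / w x) * C" for x
  proof -
    have "w x \<noteq> 0" using assms(1) assms(2)[of x] by auto
    then have "norm (f x) = norm (f x / w x) * norm (w x)"
      by (simp add: norm_divide)
    also have "\<dots> \<le> norm (f x / w x) * C"
      using assms(3) by (intro mult_left_mono) auto
    finally show ?thesis .
  qed
  show "(f \<longlongrightarrow> 0) F"
    using lim by (rule tendsto_0_le[where K=C]) (use bound in \<open>blast intro: always_eventually\<close>)
next
  assume lim: "(f \<longlongrightarrow> 0) F"
  have bound: "norm (f x / w x) \<le> norm (f x) * (1 / c)" for x
  proof -
    have "0 < norm (w x)" using assms(1) assms(2)[of x] by linarith
    have "norm (f x / w x) = norm (f x) / norm (w x)"
      by (simp add: norm_divide)
    also have "\<dots> \<le> norm (f x) / c"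
      using assms(1) assms(2)[of x] \<open>0 < norm (w x)\<close> by (intro divide_left_mono) simp_all
    finally show ?thesis by simp
  qed
  show "((\<lambda>x. f x / w x) \<longlongrightarrow> 0) F"
    using lim by (rule tendsto_0_le[where K="1 / c"]) (use bound in \<open>blast intro: always_eventually\<close>)
qed

lemma tendsto_zero_at_infinity_iff_at_top_cnj:
  fixes f :: "real \<Rightarrow> complex"
  assumes "\<And>t. f (- t) = cnj (f t)"
  shows "(f \<longlongrightarrow> 0) at_infinity \<longleftrightarrow> (f \<longlongrightarrow> 0) at_top"
proof
  assume "(f \<longlongrightarrow> 0) at_infinity"
  then show "(f \<longlongrightarrow> 0) at_top"
    using at_top_le_at_infinity by (rule tendsto_mono[rotated])
next
  assume top: "(f \<longlongrightarrow> 0) at_top"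
  then have "((\<lambda>t. f (- t)) \<longlongrightarrow> 0) at_top"
    using tendsto_cnj[OF top] by (simp add: assms)
  then have "(f \<longlongrightarrow> 0) at_bot"
    unfolding at_bot_mirror filterlim_filtermap by simp
  then show "(f \<longlongrightarrow> 0) at_infinity"
    unfolding at_infinity_eq_at_top_bot by (rule filterlim_sup[OF top])
qed

lemma norm_one_minus_cis_half: "1/2 \<le> norm (1 - cis t / 2)" "norm (1 - cis t / 2) \<le> 3/2"
  using norm_triangle_ineq2[of 1 "cis t / 2"] norm_triangle_ineq4[of 1 "cis t / 2"]
  by (simp_all add: norm_divide)

section \<open>The measure \<open>d?\<close> and its Fourier transform\<close>

lemma minkowski_cdf_eq: "0 \<le> x \<Longrightarrow> x \<le> 1 \<Longrightarrow> minkowski_cdf x = minkowski01 x"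
  by (simp add: minkowski_cdf_def)

lemma minkowski_cdf_bounds: "0 \<le> minkowski_cdf x" "minkowski_cdf x \<le> 1"
  using minkowski01_bounds by (auto simp: minkowski_cdf_def)

lemma mono_minkowski_cdf: "mono minkowski_cdf"
proof
  fix x y :: real assume "x \<le> y"
  then show "minkowski_cdf x \<le> minkowski_cdf y"
    using minkowski01_mono[of x y] minkowski01_bounds[of x] minkowski01_bounds[of y]
    by (auto simp: minkowski_cdf_def)
qed

lemma minkowski_cdf_continuous_at_right: "continuous (at_right a) minkowski_cdf"
proof (rule mono_continuous_at_right[OF mono_minkowski_cdf])
  fix e :: real assume "0 < e"
  show "\<exists>y>a. minkowski_cdf y < minkowski_cdf a + e"
  proof (cases "0 \<le> a \<and> a < 1")
    case True
    obtain k where "1 / 2 ^ k < e"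
      using real_arch_pow_inv[of e "1/2::real"] \<open>0 < e\<close> by (auto simp: power_one_over)
    moreover obtain y where "a < y" "y \<le> 1" "minkowski01 y \<le> minkowski01 a + 1 / 2 ^ k"
      using minkowski01_one_sided_approx[of k] True by blast
    ultimately show ?thesis
      using True minkowski_cdf_eq[of y] minkowski_cdf_eq[of a] by (intro exI[of _ y]) simp
  next
    case False
    define y where "y = (if a < 0 then a / 2 else a + 1)"
    have "a < y" "minkowski_cdf y = minkowski_cdf a"
      using False by (auto simp: y_def minkowski_cdf_def)
    then show ?thesis
      using \<open>0 < e\<close> by (intro exI[of _ y]) simp
  qed
qed

abbreviation minkowski_measure :: "real measure" where
  "minkowski_measure \<equiv> interval_measure minkowski_cdf"

lemma minkowski_fourier_eq_Ioc:
  "minkowski_fourier t = (LINT x:{0<..1}|minkowski_measure. cis (x * t))"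
  unfolding minkowski_fourier_def
proof (rule set_integral_cong_set)
  have "emeasure minkowski_measure {0} \<le> emeasure minkowski_measure {-1<..0}"
    by (intro emeasure_mono) auto
  also have "\<dots> = 0"
    using mono_minkowski_cdf minkowski_cdf_continuous_at_right
    by (subst emeasure_interval_measure_Ioc) (auto simp: minkowski_cdf_def dest: monoD)
  finally have "{0} \<in> null_sets minkowski_measure"
    by (intro null_setsI) auto
  then show "AE x in minkowski_measure. (x \<in> {0<..1}) = (x \<in> {0..1})"
    by (rule AE_I') auto
qed (auto simp: set_borel_measurable_def)

lemma minkowski_fourier_uminus: "minkowski_fourier (- t) = cnj (minkowski_fourier t)"
proof -
  have "minkowski_fourier (- t) = (\<integral>x. cnj (indicator {0..1} x *\<^sub>R cis (x * t)) \<partial>minkowski_measure)"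
    unfolding minkowski_fourier_def set_lebesgue_integral_def
    by (intro Bochner_Integration.integral_cong) (auto simp: cis_cnj)
  also have "\<dots> = cnj (minkowski_fourier t)"
    unfolding minkowski_fourier_def set_lebesgue_integral_def by (rule Bochner_Integration.integral_cnj)
  finally show ?thesis .
qed

lemma borel_measurable_minkowski_cdf [measurable]: "minkowski_cdf \<in> borel_measurable borel"
  using mono_minkowski_cdf by (rule borel_measurable_mono)

lemma minkowski_inv_cis_integral_unit_interval:
  assumes "t \<noteq> 0"
  shows "(LINT x:{0..<1}|lborel. complex_of_real (minkowski_inv x) * cis (x * t)) =
    (cis t - 2 + minkowski_fourier t) / (\<i> * of_real t)"
proof -
  have integrable: "set_integrable lborel {0..<1} (\<lambda>x. complex_of_real (1 - minkowski_cdf x) * cis (x * t))"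
  proof (rule set_integrable_bounded_atLeastLessThan[where B=1])
    show "norm (complex_of_real (1 - minkowski_cdf x) * cis (x * t)) \<le> 1" for x
      using minkowski_cdf_bounds[of x] by (simp add: norm_mult del: of_real_diff)
  qed simp
  have "(LINT x:{0..<1}|lborel. complex_of_real (minkowski_inv x) * cis (x * t)) =
      (LINT x:{0..<1}|lborel. complex_of_real (2 - minkowski_cdf x) * cis (x * t))"
    by (intro set_lebesgue_integral_cong) (auto simp: minkowski_inv_eq_unit_interval minkowski_cdf_eq)
  also have "\<dots> = (LINT x:{0..<1}|lborel. complex_of_real (1 - minkowski_cdf x) * cis (x * t) + cis (x * t))"
    by (intro set_lebesgue_integral_cong) (auto simp: algebra_simps)
  also have "\<dots> = (LINT x:{0..<1}|lborel. complex_of_real (1 - minkowski_cdf x) * cis (x * t)) +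
      (LINT x:{0..<1}|lborel. cis (x * t))"
    using integrable set_integrable_bounded_atLeastLessThan[of "\<lambda>x. cis (x * t)" 1]
    by (intro set_integral_add) simp_all
  also have "\<dots> = (minkowski_fourier t - 1) / (\<i> * of_real t) + (cis t - 1) / (\<i> * of_real t)"
    using set_integral_interval_measure_tail_cis[OF mono_minkowski_cdf
        minkowski_cdf_continuous_at_right assms, of 0 1]
      set_integral_cis_atLeastLessThan[OF assms, of 0 1]
    by (simp add: minkowski_cdf_def minkowski_fourier_eq_Ioc)
  finally show ?thesis
    by (simp add: add_divide_distrib[symmetric] algebra_simps)
qed

lemma minkowski_inv_cis_integral:
  shows "set_integrable lborel {0..} (\<lambda>x. complex_of_real (minkowski_inv x) * cis (x * t))"
    and "(LINT x:{0..}|lborel. complex_of_real (minkowski_inv x) * cis (x * t)) =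
      (LINT x:{0..<1}|lborel. complex_of_real (minkowski_inv x) * cis (x * t)) / (1 - cis t / 2)"
proof -
  have unit_interval: "indicator {0..<1} x *\<^sub>R (complex_of_real (minkowski_inv x) * cis (x * t)) =
      indicator {0..<1} x *\<^sub>R (complex_of_real (2 - minkowski_cdf x) * cis (x * t))" for x
    using minkowski_inv_eq_unit_interval[of x] minkowski_cdf_eq[of x] by (auto simp: indicator_def)
  have shift: "complex_of_real (minkowski_inv (x + 1)) * cis ((x + 1) * t) =
      cis t / 2 * (complex_of_real (minkowski_inv x) * cis (x * t))" if "0 \<le> x" for x
    using that by (simp add: minkowski_inv_add_1 distrib_right cis_mult[symmetric])
  have "norm (cis t / 2) < 1" by (simp add: norm_divide)
  moreover have "set_borel_measurable lborel {0..<1} (\<lambda>x. complex_of_real (minkowski_inv x) * cis (x * t))"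
    unfolding set_borel_measurable_def unit_interval by simp
  moreover have "norm (complex_of_real (minkowski_inv x) * cis (x * t)) \<le> 2" if "0 \<le> x" "x < 1" for x
    using that minkowski01_bounds[of x]
    by (simp add: norm_mult minkowski_inv_eq_unit_interval del: of_real_diff)
  ultimately show "set_integrable lborel {0..} (\<lambda>x. complex_of_real (minkowski_inv x) * cis (x * t))"
    and "(LINT x:{0..}|lborel. complex_of_real (minkowski_inv x) * cis (x * t)) =
      (LINT x:{0..<1}|lborel. complex_of_real (minkowski_inv x) * cis (x * t)) / (1 - cis t / 2)"
    using set_integral_geometric_shift[where g="\<lambda>x. complex_of_real (minkowski_inv x) * cis (x * t)",
        OF shift] by blast+
qed

lemma minkowski_inv_sin_cos_transform:
  assumes "t \<noteq> 0"
  shows "t * (LBINT x:{0<..}. minkowski_inv x * sin (x * t)) = 2 - Re (minkowski_fourier t / (1 - cis t / 2))"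
    and "t * (LBINT x:{0<..}. minkowski_inv x * cos (x * t)) = Im (minkowski_fourier t / (1 - cis t / 2))"
proof -
  define g where "g x = complex_of_real (minkowski_inv x) * cis (x * t)" for x
  define w where "w = 1 - cis t / 2"
  have "w \<noteq> 0"
    using norm_one_minus_cis_half(1)[of t] by (auto simp: w_def)
  have "cis t - 2 + minkowski_fourier t = minkowski_fourier t - 2 * w"
    by (simp add: w_def)
  then have "complex_of_real t * (LINT x:{0..}|lborel. g x) =
      complex_of_real t * ((minkowski_fourier t - 2 * w) / (\<i> * of_real t) / w)"
    unfolding g_def minkowski_inv_cis_integral(2) minkowski_inv_cis_integral_unit_interval[OF assms]
    by (simp add: w_def)
  also have "\<dots> = (minkowski_fourier t - 2 * w) / (\<i> * w)"
    using assms by simp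
  also have "\<dots> = \<i> * (2 - minkowski_fourier t / w)"
    using \<open>w \<noteq> 0\<close> by (simp add: field_simps)
  finally have transform:
    "complex_of_real t * (LINT x:{0..}|lborel. g x) = \<i> * (2 - minkowski_fourier t / w)" .
  have "set_integrable lborel {0..} g"
    unfolding g_def by (rule minkowski_inv_cis_integral(1))
  note Ioi = set_integral_greaterThan_atLeast[OF this]
  have "Re (g x) = minkowski_inv x * cos (x * t)" "Im (g x) = minkowski_inv x * sin (x * t)" for x
    by (simp_all add: g_def)
  note Re_Im = set_integral_Re_Im[OF Ioi(1), unfolded Ioi(2) this]
  show "t * (LBINT x:{0<..}. minkowski_inv x * sin (x * t)) = 2 - Re (minkowski_fourier t / (1 - cis t / 2))"
    using arg_cong[OF transform, of Im] Re_Im(2) by (simp add: w_def)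
  show "t * (LBINT x:{0<..}. minkowski_inv x * cos (x * t)) = Im (minkowski_fourier t / (1 - cis t / 2))"
    using arg_cong[OF transform, of Re] Re_Im(1) by (simp add: w_def)
qed

theorem corollary3:
  shows "(minkowski_fourier \<longlongrightarrow> 0) at_infinity \<longleftrightarrow>
     (((\<lambda>t. t * (LBINT x:{0<..}. minkowski_inv x * sin (x * t))) \<longlongrightarrow> 2) at_top \<and>
      ((\<lambda>t. t * (LBINT x:{0<..}. minkowski_inv x * cos (x * t))) \<longlongrightarrow> 0) at_top)"
proof -
  define \<Phi> where "\<Phi> t = minkowski_fourier t / (1 - cis t / 2)" for t
  have eventually_nonzero: "\<forall>\<^sub>F t in at_top. (t::real) \<noteq> 0"
    using eventually_gt_at_top[of 0] by eventually_elim simp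
  have "(minkowski_fourier \<longlongrightarrow> 0) at_infinity \<longleftrightarrow> (minkowski_fourier \<longlongrightarrow> 0) at_top"
    by (rule tendsto_zero_at_infinity_iff_at_top_cnj) (rule minkowski_fourier_uminus)
  also have "\<dots> \<longleftrightarrow> (\<Phi> \<longlongrightarrow> 0) at_top"
    unfolding \<Phi>_def using norm_one_minus_cis_half
    by (intro tendsto_zero_divide_bounded_below_iff[where c="1/2" and C="3/2", symmetric]) auto
  also have "\<dots> \<longleftrightarrow> ((\<lambda>t. 2 - Re (\<Phi> t)) \<longlongrightarrow> 2) at_top \<and> ((\<lambda>t. Im (\<Phi> t)) \<longlongrightarrow> 0) at_top"
    unfolding tendsto_complex_iff[of \<Phi>]
    using tendsto_add_const_iff[of 2 "\<lambda>t. - Re (\<Phi> t)" 0 at_top]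
      tendsto_minus_cancel_left[of "\<lambda>t. Re (\<Phi> t)" 0 at_top] by simp
  also have "\<dots> \<longleftrightarrow> ((\<lambda>t. t * (LBINT x:{0<..}. minkowski_inv x * sin (x * t))) \<longlongrightarrow> 2) at_top \<and>
      ((\<lambda>t. t * (LBINT x:{0<..}. minkowski_inv x * cos (x * t))) \<longlongrightarrow> 0) at_top"
  proof (intro arg_cong2[where f="(\<and>)"] tendsto_cong)
    show "\<forall>\<^sub>F t in at_top. 2 - Re (\<Phi> t) = t * (LBINT x:{0<..}. minkowski_inv x * sin (x * t))"
      "\<forall>\<^sub>F t in at_top. Im (\<Phi> t) = t * (LBINT x:{0<..}. minkowski_inv x * cos (x * t))"
      using eventually_nonzero by (eventually_elim, simp add: \<Phi>_def minkowski_inv_sin_cos_transform)+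
  qed
  finally show ?thesis .
qed

end
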